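(* Consider the 2-user system below and any statistics-unaware algorithm $\pi$ that transmits (i.e., chooses a nonzero vector) whenever at least one channel is ON. Then there exists a PMF $P\in\{\text{A},\text{B}\}$ for $S[t]$ such that, when $S[t]$ is i.i.d. with PMF $P$ and $\pi$ is run, $$\phi\big(\mathbb{E}[\overline{\mu}_1[T]],\,\mathbb{E}[\overline{\mu}_2[T]]\big)\;\le\;\phi^{opt}_P-\frac{1}{35T}\qquad\text{for all }T\in\{2,3,4,\ldots\},$$ where $\phi^{opt}_P=\log(1+3/4)+\log(1+1/4)$ is the optimal utility under $P$ (the same value for both A and B).
   Context: Two-user ON/OFF system: slotted time $t\in\{0,1,2,\ldots\}$; channel states $S[t]\in\{(ON,OFF),(ON,ON),(OFF,ON)\}$ are i.i.d. over slots. The allowed decision sets are: if $S[t]=(ON,OFF)$, $(\mu_1[t],\mu_2[t])\in\{(0,0),(1,0)\}$; if $S[t]=(ON,ON)$, $(\mu_1[t],\mu_2[t])\in\{(0,0),(1,0),(0,1)\}$; if $S[t]=(OFF,ON)$, $(\mu_1[t],\mu_2[t])\in\{(0,0),(0,1)\}$. PMF A assigns probabilities $3/4,1/4,0$ and PMF B assigns $0,1/4,3/4$ to $(ON,OFF),(ON,ON),(OFF,ON)$ respectively. The utility is $\phi(\gamma_1,\gamma_2)=\log(1+\gamma_1)+\log(1+\gamma_2)$ on $[0,1]^2$ (natural log). $\overline{\mu}_i[T]=\frac1T\sum_{t=0}^{T-1}\mu_i[t]$. A statistics-unaware algorithm is a fixed (possibly randomized) causal rule choosing $\mu[t]$ in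 the allowed set as a function of the current and past channel observations, past decisions, and internal randomness only; it is fixed before the PMF is chosen and does not depend on the PMF. The optimal utility under a PMF $P$ is $\phi^{opt}_P=\max_{x\in\Lambda_P}\phi(x)$, where $\Lambda_P$ is the set of expectations $\mathbb{E}[\mu[0]]$ achievable under $P$ by any (possibly randomized) rule choosing $\mu[0]$ from the allowed set given $S[0]$. *)

theory Defs
  imports "HOL-Probability.Probability"
begin

datatype chan = ON_OFF | ON_ON | OFF_ON

type_synonym dec = "real \<times> real"

definition allowed :: "chan \<Rightarrow> dec set" where
  "allowed s = (case s of
      ON_OFF \<Rightarrow> {(0,0),(1,0)}
    | ON_ON  \<Rightarrow> {(0,0),(1,0),(0,1)}
    | OFF_ON \<Rightarrow> {(0,0),(0,1)})"

definition pmfA :: "chan pmf" where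
  "pmfA = pmf_of_list [(ON_OFF, 3/4), (ON_ON, 1/4), (OFF_ON, 0)]"

definition pmfB :: "chan pmf" where
  "pmfB = pmf_of_list [(ON_OFF, 0), (ON_ON, 1/4), (OFF_ON, 3/4)]"

definition phi :: "real \<Rightarrow> real \<Rightarrow> real" where
  "phi g1 g2 = ln (1 + g1) + ln (1 + g2)"

text \<open>It does not depend on the PMF of the channel.\<close>
type_synonym policy = "(chan \<times> dec) list \<Rightarrow> chan \<Rightarrow> dec pmf"

definition valid_policy :: "policy \<Rightarrow> bool" where
  "valid_policy alg \<longleftrightarrow> (\<forall>h s. set_pmf (alg h s) \<subseteq> allowed s)"

definition always_transmits :: "policy \<Rightarrow> bool" where
  "always_transmits alg \<longleftrightarrow> (\<forall>h s. (0,0) \<notin> set_pmf (alg h s))"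

fun traj :: "chan pmf \<Rightarrow> policy \<Rightarrow> nat \<Rightarrow> (chan \<times> dec) list pmf" where
  "traj P alg 0 = return_pmf []"
| "traj P alg (Suc n) =
     bind_pmf (traj P alg n) (\<lambda>h. bind_pmf P (\<lambda>s. map_pmf (\<lambda>d. h @ [(s,d)]) (alg h s)))"

definition Emubar1 :: "chan pmf \<Rightarrow> policy \<Rightarrow> nat \<Rightarrow> real" where
  "Emubar1 P alg T = measure_pmf.expectation (traj P alg T)
      (\<lambda>h. (1 / real T) * (\<Sum>t<T. fst (snd (h ! t))))"

definition Emubar2 :: "chan pmf \<Rightarrow> policy \<Rightarrow> nat \<Rightarrow> real" where
  "Emubar2 P alg T = measure_pmf.expectation (traj P alg T)
      (\<lambda>h. (1 / real T) * (\<Sum>t<T. snd (snd (h ! t))))"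

definition Lambda :: "chan pmf \<Rightarrow> dec set" where
  "Lambda P = {(measure_pmf.expectation (bind_pmf P r) fst,
                measure_pmf.expectation (bind_pmf P r) snd) | r.
               \<forall>s. set_pmf (r s) \<subseteq> allowed s}"

definition phi_opt :: "chan pmf \<Rightarrow> real" where
  "phi_opt P = (SUP x\<in>Lambda P. phi (fst x) (snd x))"

end

theory Submission
  imports Defs
begin

(* At slot 0 the history is empty, so on state (ON,ON) the algorithm serves user 1 with some
   probability q1 that cannot depend on the PMF. If q1 >= 1/2, take PMF A: user 1 is then served
   with probability at least 3/4 in every slot and at least 7/8 in slot 0, so its time average
   exceeds the optimal share 3/4 by at least 1/(8T); since the algorithm always serves exactly
   one user, the other average falls short by the same amount, and the tangent plane of the
   concave utility at the optimum (3/4, 1/4) turns this imbalance into a loss of 1/(35T).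
   If q1 < 1/2, PMF B and user 2 play the same roles. *)

instance chan :: finite
  by standard (rule finite_subset[of _ "{ON_OFF, ON_ON, OFF_ON}"], auto intro: chan.exhaust)

lemma expectation_bind_pmf_finite:
  fixes h :: "'b \<Rightarrow> real"
  assumes "finite (set_pmf p)" and "\<And>x. x \<in> set_pmf p \<Longrightarrow> finite (set_pmf (f x))"
  shows "measure_pmf.expectation (p \<bind> f) h
       = measure_pmf.expectation p (\<lambda>x. measure_pmf.expectation (f x) h)"
  using assms by (simp add: pmf_expectation_bind[OF assms order.refl] integral_measure_pmf_real
      mult.commute)

lemma expectation_pmfA:
  "measure_pmf.expectation pmfA g = 3/4 * g ON_OFF + 1/4 * (g ON_ON :: real)"
proof -
  have wf: "pmf_of_list_wf [(ON_OFF, 3/4::real), (ON_ON, 1/4), (OFF_ON, 0)]"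
    by (simp add: pmf_of_list_wf_def)
  have "measure_pmf.expectation pmfA g = (\<Sum>s\<in>UNIV. g s * pmf pmfA s)"
    by (rule integral_measure_pmf_real) auto
  also have "(UNIV :: chan set) = {ON_OFF, ON_ON, OFF_ON}" by (auto intro: chan.exhaust)
  finally show ?thesis by (simp add: pmfA_def pmf_pmf_of_list[OF wf])
qed

lemma expectation_pmfB:
  "measure_pmf.expectation pmfB g = 1/4 * g ON_ON + 3/4 * (g OFF_ON :: real)"
proof -
  have wf: "pmf_of_list_wf [(ON_OFF, 0::real), (ON_ON, 1/4), (OFF_ON, 3/4)]"
    by (simp add: pmf_of_list_wf_def)
  have "measure_pmf.expectation pmfB g = (\<Sum>s\<in>UNIV. g s * pmf pmfB s)"
    by (rule integral_measure_pmf_real) auto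
  also have "(UNIV :: chan set) = {ON_OFF, ON_ON, OFF_ON}" by (auto intro: chan.exhaust)
  finally show ?thesis by (simp add: pmfB_def pmf_pmf_of_list[OF wf])
qed

lemma ln_le_tangent:
  fixes c z :: real
  assumes "0 < c" and "0 < z"
  shows "ln z \<le> ln c + (z - c) / c"
proof -
  have "ln (z / c) \<le> z / c - 1" using assms by (intro ln_le_minus_one) simp
  then show ?thesis using assms by (simp add: ln_div diff_divide_distrib)
qed

lemma phi_commute: "phi a b = phi b a"
  by (simp add: phi_def)

(* Tangent plane of the concave phi at the optimum (3/4, 1/4); its gradient is
   (4/7, 4/5) = (20/35, 28/35). *)
lemma phi_le_tangent:
  assumes "0 \<le> a" and "0 \<le> b"
  shows "phi a b \<le> ln (1 + 3/4) + ln (1 + 1/4) + (20 * a + 28 * b - 22) / 35"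
proof -
  have "ln (1 + a) \<le> ln (1 + 3/4) + ((1 + a) - (1 + 3/4)) / (1 + 3/4)"
    using assms by (intro ln_le_tangent) auto
  moreover have "ln (1 + b) \<le> ln (1 + 1/4) + ((1 + b) - (1 + 1/4)) / (1 + 1/4)"
    using assms by (intro ln_le_tangent) auto
  ultimately show ?thesis by (simp add: phi_def field_simps)
qed

lemma phi_le_opt:
  assumes "0 \<le> a" and "0 \<le> b" and "20 * a + 28 * b \<le> 22"
  shows "phi a b \<le> ln (1 + 3/4) + ln (1 + 1/4)"
proof -
  have "(20 * a + 28 * b - 22) / 35 \<le> 0" using assms(3) by simp
  then show ?thesis using phi_le_tangent[OF assms(1,2)] by linarith
qed

lemma phi_gap:
  fixes T :: real
  assumes "0 \<le> a" "0 \<le> b" "a + b = 1" "0 < T" "6 * T + 1 \<le> 8 * T * a"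
  shows "phi a b \<le> ln (1 + 3/4) + ln (1 + 1/4) - 1 / (35 * T)"
proof -
  have "b = 1 - a" using assms(3) by simp
  then have "(20 * a + 28 * b - 22) / 35 = (6 - 8 * a) / 35" by simp
  also have "\<dots> \<le> - 1 / (35 * T)" using assms(4,5) by (simp add: field_simps)
  finally show ?thesis using phi_le_tangent[OF assms(1,2)] by linarith
qed

lemma allowed_decision:
  assumes "d \<in> allowed s"
  shows "0 \<le> fst d" "0 \<le> snd d" "fst d + snd d \<le> 1" "d \<noteq> (0, 0) \<Longrightarrow> fst d + snd d = 1"
    "s = ON_OFF \<Longrightarrow> snd d = 0" "s = OFF_ON \<Longrightarrow> fst d = 0"
  using assms by (cases s; auto simp: allowed_def)+

lemma finite_allowed: "finite (allowed s)"
  by (cases s) (auto simp: allowed_def)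

lemma expectation_decision:
  assumes q: "set_pmf q \<subseteq> allowed s"
  shows "0 \<le> measure_pmf.expectation q fst" "0 \<le> measure_pmf.expectation q snd"
    "measure_pmf.expectation q fst + measure_pmf.expectation q snd \<le> 1"
    "(0, 0) \<notin> set_pmf q \<Longrightarrow> measure_pmf.expectation q fst + measure_pmf.expectation q snd = 1"
    "s = ON_OFF \<Longrightarrow> measure_pmf.expectation q snd = 0"
    "s = OFF_ON \<Longrightarrow> measure_pmf.expectation q fst = 0"
proof -
  have fin: "finite (set_pmf q)" using q finite_allowed by (rule finite_subset)
  note d = allowed_decision[OF subsetD[OF q]]
  have sum: "measure_pmf.expectation q fst + measure_pmf.expectation q snd
      = measure_pmf.expectation q (\<lambda>d. fst d + snd d)"
    using fin by (simp add: integrable_measure_pmf_finite)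
  show "0 \<le> measure_pmf.expectation q fst" "0 \<le> measure_pmf.expectation q snd"
    using d by (auto intro!: integral_nonneg_AE simp: AE_measure_pmf_iff)
  show "measure_pmf.expectation q fst + measure_pmf.expectation q snd \<le> 1"
    unfolding sum using d fin
    by (intro measure_pmf.integral_le_const)
      (auto simp: AE_measure_pmf_iff integrable_measure_pmf_finite)
  show "measure_pmf.expectation q fst + measure_pmf.expectation q snd = 1" if "(0, 0) \<notin> set_pmf q"
  proof -
    have "fst d + snd d = 1" if "d \<in> set_pmf q" for d
      using d(4)[OF that] that \<open>(0, 0) \<notin> set_pmf q\<close> by auto
    then show ?thesis
      unfolding sum by (subst integral_cong_AE[where g = "\<lambda>_. 1"]) (auto simp: AE_measure_pmf_iff)
  qed
  show "s = ON_OFF \<Longrightarrow> measure_pmf.expectation q snd = 0"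
    using d by (subst integral_cong_AE[where g = "\<lambda>_. 0"]) (auto simp: AE_measure_pmf_iff)
  show "s = OFF_ON \<Longrightarrow> measure_pmf.expectation q fst = 0"
    using d by (subst integral_cong_AE[where g = "\<lambda>_. 0"]) (auto simp: AE_measure_pmf_iff)
qed

lemma phi_opt_eqI:
  assumes "x \<in> Lambda P" and "phi (fst x) (snd x) = v"
    and "\<And>y. y \<in> Lambda P \<Longrightarrow> phi (fst y) (snd y) \<le> v"
  shows "phi_opt P = v"
  unfolding phi_opt_def using assms by (intro cSup_eq_maximum) force+

lemma expectation_bind_decision:
  fixes f :: "dec \<Rightarrow> real"
  assumes "\<forall>s. set_pmf (r s) \<subseteq> allowed s"
  shows "measure_pmf.expectation (P \<bind> r) f
       = measure_pmf.expectation P (\<lambda>s. measure_pmf.expectation (r s) f)"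
  using assms by (intro expectation_bind_pmf_finite) (auto intro: finite_subset[OF _ finite_allowed])

lemma Lambda_iff:
  "x \<in> Lambda P \<longleftrightarrow> (\<exists>r. (\<forall>s. set_pmf (r s) \<subseteq> allowed s) \<and>
     x = (measure_pmf.expectation P (\<lambda>s. measure_pmf.expectation (r s) fst),
          measure_pmf.expectation P (\<lambda>s. measure_pmf.expectation (r s) snd)))"
proof -
  have "(measure_pmf.expectation (P \<bind> r) fst, measure_pmf.expectation (P \<bind> r) snd)
      = (measure_pmf.expectation P (\<lambda>s. measure_pmf.expectation (r s) fst),
         measure_pmf.expectation P (\<lambda>s. measure_pmf.expectation (r s) snd))"
    if "\<forall>s. set_pmf (r s) \<subseteq> allowed s" for r
    using that by (simp add: expectation_bind_decision)
  then show ?thesis unfolding Lambda_def by auto metis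
qed

lemma Lambda_pmfA_bound:
  assumes "(a, b) \<in> Lambda pmfA"
  shows "0 \<le> a" "0 \<le> b" "20 * a + 28 * b \<le> 22"
proof -
  obtain r where r: "\<forall>s. set_pmf (r s) \<subseteq> allowed s"
    and a: "a = 3/4 * measure_pmf.expectation (r ON_OFF) fst + 1/4 * measure_pmf.expectation (r ON_ON) fst"
    and b: "b = 3/4 * measure_pmf.expectation (r ON_OFF) snd + 1/4 * measure_pmf.expectation (r ON_ON) snd"
    using assms unfolding Lambda_iff expectation_pmfA by blast
  note OFF = expectation_decision[OF r[rule_format, of ON_OFF]]
    and ON = expectation_decision[OF r[rule_format, of ON_ON]]
  show "0 \<le> a" "0 \<le> b" "20 * a + 28 * b \<le> 22"
    unfolding a b using OFF(1-3,5) ON(1-3) by simp_all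
qed

lemma Lambda_pmfB_bound:
  assumes "(a, b) \<in> Lambda pmfB"
  shows "0 \<le> a" "0 \<le> b" "28 * a + 20 * b \<le> 22"
proof -
  obtain r where r: "\<forall>s. set_pmf (r s) \<subseteq> allowed s"
    and a: "a = 1/4 * measure_pmf.expectation (r ON_ON) fst + 3/4 * measure_pmf.expectation (r OFF_ON) fst"
    and b: "b = 1/4 * measure_pmf.expectation (r ON_ON) snd + 3/4 * measure_pmf.expectation (r OFF_ON) snd"
    using assms unfolding Lambda_iff expectation_pmfB by blast
  note OFF = expectation_decision[OF r[rule_format, of OFF_ON]]
    and ON = expectation_decision[OF r[rule_format, of ON_ON]]
  show "0 \<le> a" "0 \<le> b" "28 * a + 20 * b \<le> 22"
    unfolding a b using OFF(1-3,6) ON(1-3) by simp_all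
qed

lemma phi_opt_pmfA: "phi_opt pmfA = ln (1 + 3/4) + ln (1 + 1/4)"
proof (rule phi_opt_eqI)
  let ?r = "\<lambda>s. return_pmf (if s = ON_OFF then (1, 0) else (0, 1 :: real))"
  have "\<forall>s. set_pmf (?r s) \<subseteq> allowed s" by (auto simp: allowed_def split: chan.split)
  then show "(3/4, 1/4) \<in> Lambda pmfA"
    unfolding Lambda_iff by (intro exI[of _ ?r]) (simp add: expectation_pmfA)
  show "phi (fst (3/4, 1/4)) (snd (3/4, 1/4)) = ln (1 + 3/4) + ln (1 + 1/4)"
    by (simp add: phi_def)
next
  fix y :: dec assume "y \<in> Lambda pmfA"
  then show "phi (fst y) (snd y) \<le> ln (1 + 3/4) + ln (1 + 1/4)"
    using Lambda_pmfA_bound[of "fst y" "snd y"] phi_le_opt[of "fst y" "snd y"] by simp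
qed

lemma phi_opt_pmfB: "phi_opt pmfB = ln (1 + 3/4) + ln (1 + 1/4)"
proof (rule phi_opt_eqI)
  let ?r = "\<lambda>s. return_pmf (if s = OFF_ON then (0, 1) else (1, 0 :: real))"
  have "\<forall>s. set_pmf (?r s) \<subseteq> allowed s" by (auto simp: allowed_def split: chan.split)
  then show "(1/4, 3/4) \<in> Lambda pmfB"
    unfolding Lambda_iff by (intro exI[of _ ?r]) (simp add: expectation_pmfB)
  show "phi (fst (1/4, 3/4)) (snd (1/4, 3/4)) = ln (1 + 3/4) + ln (1 + 1/4)"
    by (simp add: phi_def)
next
  fix y :: dec assume "y \<in> Lambda pmfB"
  then show "phi (fst y) (snd y) \<le> ln (1 + 3/4) + ln (1 + 1/4)"
    using Lambda_pmfB_bound[of "fst y" "snd y"] phi_le_opt[of "snd y" "fst y"]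
    by (simp add: phi_commute[of "fst y"])
qed

lemma finite_set_pmf_policy: "valid_policy alg \<Longrightarrow> finite (set_pmf (alg h s))"
  unfolding valid_policy_def by (meson finite_allowed finite_subset)

lemma expectation_policy:
  assumes "valid_policy alg" and "always_transmits alg"
  shows "0 \<le> measure_pmf.expectation (alg h s) fst" "0 \<le> measure_pmf.expectation (alg h s) snd"
    "measure_pmf.expectation (alg h s) fst + measure_pmf.expectation (alg h s) snd = 1"
    "s = ON_OFF \<Longrightarrow> measure_pmf.expectation (alg h s) fst = 1"
    "s = OFF_ON \<Longrightarrow> measure_pmf.expectation (alg h s) snd = 1"
proof -
  have "set_pmf (alg h s) \<subseteq> allowed s" and "(0, 0) \<notin> set_pmf (alg h s)"
    using assms unfolding valid_policy_def always_transmits_def by auto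
  note d = expectation_decision[OF this(1)] expectation_decision(4)[OF this]
  then show "0 \<le> measure_pmf.expectation (alg h s) fst" "0 \<le> measure_pmf.expectation (alg h s) snd"
    "measure_pmf.expectation (alg h s) fst + measure_pmf.expectation (alg h s) snd = 1"
    "s = ON_OFF \<Longrightarrow> measure_pmf.expectation (alg h s) fst = 1"
    "s = OFF_ON \<Longrightarrow> measure_pmf.expectation (alg h s) snd = 1"
    by auto
qed

lemma finite_set_pmf_traj: "valid_policy alg \<Longrightarrow> finite (set_pmf (traj P alg n))"
  by (induction n) (auto simp: finite_set_pmf_policy)

lemma length_traj: "h \<in> set_pmf (traj P alg n) \<Longrightarrow> length h = n"
  by (induction n arbitrary: h) auto

lemma traj_decisions:
  assumes "\<And>h s. set_pmf (alg h s) \<subseteq> D s"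
  shows "h \<in> set_pmf (traj P alg n) \<Longrightarrow> x \<in> set h \<Longrightarrow> snd x \<in> D (fst x)"
  by (induction n arbitrary: h) (auto dest!: subsetD[OF assms])

definition service :: "(dec \<Rightarrow> real) \<Rightarrow> (chan \<times> dec) list \<Rightarrow> real" where
  "service f h = (\<Sum>x\<leftarrow>h. f (snd x))"

lemma expectation_service_traj_Suc:
  assumes "valid_policy alg"
  shows "measure_pmf.expectation (traj P alg (Suc n)) (service f)
       = measure_pmf.expectation (traj P alg n)
           (\<lambda>h. service f h
              + measure_pmf.expectation P (\<lambda>s. measure_pmf.expectation (alg h s) f))"
proof -
  note fin = finite_set_pmf_traj[OF assms] finite_set_pmf_policy[OF assms]
  have "measure_pmf.expectation (traj P alg (Suc n)) (service f)
      = measure_pmf.expectation (traj P alg n) (\<lambda>h. measure_pmf.expectation P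
          (\<lambda>s. measure_pmf.expectation (alg h s) (\<lambda>d. service f h + f d)))"
    using fin by (simp add: expectation_bind_pmf_finite service_def)
  also have "\<dots> = measure_pmf.expectation (traj P alg n)
           (\<lambda>h. service f h
              + measure_pmf.expectation P (\<lambda>s. measure_pmf.expectation (alg h s) f))"
    using fin by (simp add: integrable_measure_pmf_finite)
  finally show ?thesis .
qed

lemma expectation_service_lower_bound:
  assumes "valid_policy alg"
    and step: "\<And>h. c \<le> measure_pmf.expectation P (\<lambda>s. measure_pmf.expectation (alg h s) f)"
  shows "c * n + measure_pmf.expectation P (\<lambda>s. measure_pmf.expectation (alg [] s) f)
       \<le> measure_pmf.expectation (traj P alg (Suc n)) (service f)"
proof (induction n)
  case 0
  then show ?case unfolding expectation_service_traj_Suc[OF assms(1)] by (simp add: service_def)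
next
  case (Suc n)
  have "measure_pmf.expectation (traj P alg (Suc n)) (service f) + c
      = measure_pmf.expectation (traj P alg (Suc n)) (\<lambda>h. service f h + c)"
    using finite_set_pmf_traj[OF assms(1)]
    by (simp add: integrable_measure_pmf_finite del: traj.simps)
  also have "\<dots> \<le> measure_pmf.expectation (traj P alg (Suc (Suc n))) (service f)"
    unfolding expectation_service_traj_Suc[OF assms(1)] using step finite_set_pmf_traj[OF assms(1)]
    by (intro integral_mono_AE)
      (auto simp: AE_measure_pmf_iff integrable_measure_pmf_finite simp del: traj.simps)
  finally show ?case using Suc.IH by (simp add: distrib_left)
qed

lemma expectation_time_average:
  "measure_pmf.expectation (traj P alg T) (\<lambda>h. 1 / real T * (\<Sum>t<T. f (snd (h ! t))))
     = measure_pmf.expectation (traj P alg T) (service f) / real T"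
proof -
  have "1 / real T * (\<Sum>t<T. f (snd (h ! t))) = service f h / real T"
    if "h \<in> set_pmf (traj P alg T)" for h
    using length_traj[OF that] by (simp add: service_def sum_list_sum_nth atLeast0LessThan)
  then show ?thesis by (subst integral_cong_AE[where g = "\<lambda>h. service f h / real T"])
      (auto simp: AE_measure_pmf_iff)
qed

lemma service_traj:
  assumes "valid_policy alg" and "always_transmits alg" and h: "h \<in> set_pmf (traj P alg n)"
  shows "0 \<le> service fst h" "0 \<le> service snd h" "service fst h + service snd h = real n"
proof -
  have "\<And>h s. set_pmf (alg h s) \<subseteq> allowed s - {(0, 0)}"
    using assms(1,2) unfolding valid_policy_def always_transmits_def by auto
  from traj_decisions[OF this h]
  have x: "snd x \<in> allowed (fst x)" "snd x \<noteq> (0, 0)" if "x \<in> set h" for x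
    using that by auto
  show "0 \<le> service fst h" "0 \<le> service snd h"
    unfolding service_def by (rule sum_list_nonneg; use allowed_decision(1,2)[OF x(1)] in auto)+
  have "service fst h + service snd h = (\<Sum>x\<leftarrow>h. fst (snd x) + snd (snd x))"
    by (simp add: service_def sum_list_addf)
  also have "\<dots> = (\<Sum>x\<leftarrow>h. 1)"
    using allowed_decision(4)[OF x] by (intro arg_cong[where f = sum_list] map_cong) auto
  finally show "service fst h + service snd h = real n"
    using length_traj[OF h] by (simp add: sum_list_triv)
qed

lemma Emubar1_eq: "Emubar1 P alg T = measure_pmf.expectation (traj P alg T) (service fst) / real T"
  unfolding Emubar1_def by (rule expectation_time_average)

lemma Emubar2_eq: "Emubar2 P alg T = measure_pmf.expectation (traj P alg T) (service snd) / real T"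
  unfolding Emubar2_def by (rule expectation_time_average)

lemma Emubar_simplex:
  assumes "valid_policy alg" and "always_transmits alg" and "0 < T"
  shows "0 \<le> Emubar1 P alg T" "0 \<le> Emubar2 P alg T" "Emubar1 P alg T + Emubar2 P alg T = 1"
proof -
  note s = service_traj[OF assms(1,2)]
  show "0 \<le> Emubar1 P alg T" "0 \<le> Emubar2 P alg T"
    unfolding Emubar1_eq Emubar2_eq using s(1,2)
    by (auto intro!: divide_nonneg_nonneg integral_nonneg_AE simp: AE_measure_pmf_iff)
  have "measure_pmf.expectation (traj P alg T) (service fst)
      + measure_pmf.expectation (traj P alg T) (service snd)
      = measure_pmf.expectation (traj P alg T) (\<lambda>h. service fst h + service snd h)"
    using finite_set_pmf_traj[OF assms(1)] by (simp add: integrable_measure_pmf_finite)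
  also have "\<dots> = real T"
    using s(3) by (subst integral_cong_AE[where g = "\<lambda>_. real T"]) (auto simp: AE_measure_pmf_iff)
  finally show "Emubar1 P alg T + Emubar2 P alg T = 1"
    unfolding Emubar1_eq Emubar2_eq using assms(3) by (simp add: add_divide_distrib[symmetric])
qed

lemma utility_gap_pmfA:
  assumes "valid_policy alg" and "always_transmits alg" and "0 < T"
    and "1/2 \<le> measure_pmf.expectation (alg [] ON_ON) fst"
  shows "phi (Emubar1 pmfA alg T) (Emubar2 pmfA alg T)
       \<le> ln (1 + 3/4) + ln (1 + 1/4) - 1 / (35 * real T)"
proof -
  obtain n where T: "T = Suc n" using assms(3) by (cases T) auto
  then have T_real: "real T = real n + 1" by simp
  note e = expectation_policy[OF assms(1,2)]
  have "3/4 \<le> measure_pmf.expectation pmfA (\<lambda>s. measure_pmf.expectation (alg h s) fst)" for h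
    using e(1)[of h ON_ON] e(4)[of ON_OFF h] by (simp add: expectation_pmfA)
  from expectation_service_lower_bound[OF assms(1) this, of n]
  have "3/4 * n + 7/8 \<le> measure_pmf.expectation (traj pmfA alg T) (service fst)"
    using assms(4) e(4)[of ON_OFF "[]"] unfolding T by (simp add: expectation_pmfA)
  moreover have "8 * real T * Emubar1 pmfA alg T
      = 8 * measure_pmf.expectation (traj pmfA alg T) (service fst)"
    using assms(3) unfolding Emubar1_eq by simp
  ultimately have "6 * real T + 1 \<le> 8 * real T * Emubar1 pmfA alg T"
    using T_real by linarith
  then show ?thesis using Emubar_simplex[OF assms(1-3)] assms(3) by (intro phi_gap) simp_all
qed

lemma utility_gap_pmfB:
  assumes "valid_policy alg" and "always_transmits alg" and "0 < T"
    and "1/2 \<le> measure_pmf.expectation (alg [] ON_ON) snd"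
  shows "phi (Emubar1 pmfB alg T) (Emubar2 pmfB alg T)
       \<le> ln (1 + 3/4) + ln (1 + 1/4) - 1 / (35 * real T)"
proof -
  obtain n where T: "T = Suc n" using assms(3) by (cases T) auto
  then have T_real: "real T = real n + 1" by simp
  note e = expectation_policy[OF assms(1,2)]
  have "3/4 \<le> measure_pmf.expectation pmfB (\<lambda>s. measure_pmf.expectation (alg h s) snd)" for h
    using e(2)[of h ON_ON] e(5)[of OFF_ON h] by (simp add: expectation_pmfB)
  from expectation_service_lower_bound[OF assms(1) this, of n]
  have "3/4 * n + 7/8 \<le> measure_pmf.expectation (traj pmfB alg T) (service snd)"
    using assms(4) e(5)[of OFF_ON "[]"] unfolding T by (simp add: expectation_pmfB)
  moreover have "8 * real T * Emubar2 pmfB alg T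
      = 8 * measure_pmf.expectation (traj pmfB alg T) (service snd)"
    using assms(3) unfolding Emubar2_eq by simp
  ultimately have "6 * real T + 1 \<le> 8 * real T * Emubar2 pmfB alg T"
    using T_real by linarith
  then show ?thesis using Emubar_simplex[OF assms(1-3)] assms(3)
    by (subst phi_commute, intro phi_gap) (simp_all add: add.commute)
qed

theorem mainTheorem7:
  fixes alg :: policy
  assumes "valid_policy alg"
    and "always_transmits alg"
  shows "\<exists>P\<in>{pmfA, pmfB}.
           phi_opt P = ln (1 + 3/4) + ln (1 + 1/4) \<and>
           (\<forall>T::nat. T \<ge> 2 \<longrightarrow>
              phi (Emubar1 P alg T) (Emubar2 P alg T) \<le> phi_opt P - 1 / (35 * real T))"
proof -
  have "measure_pmf.expectation (alg [] ON_ON) fst + measure_pmf.expectation (alg [] ON_ON) snd = 1"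
    by (rule expectation_policy[OF assms])
  then consider "1/2 \<le> measure_pmf.expectation (alg [] ON_ON) fst"
    | "1/2 \<le> measure_pmf.expectation (alg [] ON_ON) snd" by linarith
  then show ?thesis
  proof cases
    case 1
    then show ?thesis using utility_gap_pmfA[OF assms] phi_opt_pmfA by auto
  next
    case 2
    then show ?thesis using utility_gap_pmfB[OF assms] phi_opt_pmfB by auto
  qed
qed

end
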